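(* Let $f(X)=\mathbb{E}_{\xi\sim\mathcal{D}}[f_\xi(X)]$ on $\mathcal{S}$, each $f_\xi$ continuously differentiable, $f^{\inf}:=\inf_X f(X)>-\infty$, and suppose $f$ is layer-wise $(L^0,L^1)$-smooth with constants $L^0,L^1\in\mathbb{R}^p_+$. Assume the stochastic gradients are unbiased, $\mathbb{E}_\xi[\nabla f_\xi(X)]=\nabla f(X)$, and have bounded relative variance: there is $0\le\zeta<1$ such that almost surely $\|\nabla_i f_\xi(X)-\nabla_i f(X)\|_{(i)\star}\le\zeta\|\nabla_i f_\xi(X)\|_{(i)\star}$ for all $X$ and $i$. Fix $\varepsilon>0$ and run stochastic Gluon with $\beta^k=0$ (so $M_i^k=\nabla_i f_{\xi^k}(X^k)$) and radii $$t_i^k=\frac{(1-\zeta)\|\nabla_i f_{\xi^k}(X^k)\|_{(i)\star}}{L^0_i+(1+\zeta)L^1_i\|\nabla_i f_{\xi^k}(X^k)\|_{(i)\star}}$$ (assumed well defined, with $t_i^k:=0$ when $\nabla_i f_{\xi^k}(X^k)=0$). Let $\Delta^0:=f(X^0)-f^{\inf}$, $L^1_{\max}:=\max_iL^1_i$. Then: (1) With $K:=\left\lceil\frac{2\Delta^0\sum_{i=1}^pL^0_i}{(1-\zeta)^2\varepsilon^2}+\frac{2(1+\zeta)L^1_{\max}\Delta^0}{(1-\zeta)^2\varepsilon}\right\rceil$ (provided $K\ge1$), $\min_{k=0,\dots,K-1}\sum_{i=1}^p\mathbb{E}\|\nabla_i f(X^k)\|_{(i)\star}\le\varepsilon$.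 (2) If $L^1_i>0$ for all $i$, set $H:=\frac1p\sum_{j=1}^p\frac1{L^1_j}$ and $K:=\left\lceil\frac{2\Delta^0\sum_{i=1}^p\frac{L^0_i}{(L^1_i)^2}}{\varepsilon^2(1-\zeta)^2H^2}+\frac{2\Delta^0(1+\zeta)}{\varepsilon(1-\zeta)^2H}\right\rceil$; then (provided $K\ge1$) $\min_{k=0,\dots,K-1}\sum_{i=1}^p\frac{1/L^1_i}{H}\mathbb{E}\|\nabla_i f(X^k)\|_{(i)\star}\le\varepsilon$.
   Context: $\mathcal{S}=\mathcal{S}_1\times\cdots\times\mathcal{S}_p$ with $\mathcal{S}_i=\mathbb{R}^{m_i\times n_i}$; $X=[X_1,\dots,X_p]$. Each $\mathcal{S}_i$ has the trace inner product $\langle X_i,Y_i\rangle_{(i)}=\operatorname{tr}(X_i^\top Y_i)$ and a norm $\|\cdot\|_{(i)}$ with dual norm $\|Y_i\|_{(i)\star}=\sup_{\|Z_i\|_{(i)}\le1}\langle Y_i,Z_i\rangle_{(i)}$; $\nabla_i$ denotes the gradient block for $X_i$. Layer-wise $(L^0,L^1)$-smoothness: for all $i$, $X,Y$, $\|\nabla_i f(X)-\nabla_i f(Y)\|_{(i)\star}\le (L^0_i+L^1_i\|\nabla_i f(X)\|_{(i)\star})\|X_i-Y_i\|_{(i)}$. Stochastic Gluon: at iteration $k$ sample $\xi^k\sim\mathcal{D}$ independently of the past, set $M_i^k=\beta^kM_i^{k-1}+(1-\beta^k)\nabla_i f_{\xi^k}(X^k)$ and $X_i^{k+1}\in\arg\min\{\langle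 M_i^k,X_i\rangle_{(i)}:\|X_i-X_i^k\|_{(i)}\le t_i^k\}$ (any minimizer) for each $i$, $X^{k+1}=[X_1^{k+1},\dots,X_p^{k+1}]$. Expectations are over the sampling. *)

theory Defs
  imports "HOL-Probability.Probability"
begin

text \<open>The product space S = S_1 x ... x S_p of matrix spaces is represented by its
  vectorisation: a vector in real^'n (finite index type 'n of all matrix entries),
  together with a map lay assigning each entry (coordinate) to its layer.
  The trace inner product of matrices is the entrywise (Euclidean) inner product.\<close>

definition layer_space :: "('n \<Rightarrow> nat) \<Rightarrow> nat \<Rightarrow> (real^'n) set" where
  "layer_space lay i = {x. \<forall>k. lay k \<noteq> i \<longrightarrow> x $ k = 0}"

definition blk :: "('n \<Rightarrow> nat) \<Rightarrow> nat \<Rightarrow> real^'n \<Rightarrow> real^'n" where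
  "blk lay i x = (\<chi> k. if lay k = i then x $ k else 0)"

definition norm_on :: "'v::real_vector set \<Rightarrow> ('v \<Rightarrow> real) \<Rightarrow> bool" where
  "norm_on V N \<longleftrightarrow>
     (\<forall>x\<in>V. 0 \<le> N x) \<and> (\<forall>x\<in>V. N x = 0 \<longleftrightarrow> x = 0) \<and>
     (\<forall>x\<in>V. \<forall>c. N (c *\<^sub>R x) = \<bar>c\<bar> * N x) \<and>
     (\<forall>x\<in>V. \<forall>y\<in>V. N (x + y) \<le> N x + N y)"

definition dual_norm :: "('n \<Rightarrow> nat) \<Rightarrow> (real^'n \<Rightarrow> real) \<Rightarrow> nat \<Rightarrow> real^'n \<Rightarrow> real" where
  "dual_norm lay Ni i y = Sup {blk lay i y \<bullet> z | z. z \<in> layer_space lay i \<and> Ni z \<le> 1}"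

definition layerwise_L0L1_smooth ::
  "('n \<Rightarrow> nat) \<Rightarrow> nat \<Rightarrow> (nat \<Rightarrow> real^'n \<Rightarrow> real) \<Rightarrow> (nat \<Rightarrow> real) \<Rightarrow> (nat \<Rightarrow> real)
    \<Rightarrow> (real^'n \<Rightarrow> real^'n) \<Rightarrow> bool" where
  "layerwise_L0L1_smooth lay p N L0 L1 gF \<longleftrightarrow>
     (\<forall>i<p. \<forall>X Y. dual_norm lay (N i) i (gF X - gF Y)
        \<le> (L0 i + L1 i * dual_norm lay (N i) i (gF X)) * N i (blk lay i X - blk lay i Y))"

definition lmo_step :: "('n \<Rightarrow> nat) \<Rightarrow> (real^'n \<Rightarrow> real) \<Rightarrow> nat \<Rightarrow> real^'n \<Rightarrow> real^'n \<Rightarrow> real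
     \<Rightarrow> real^'n \<Rightarrow> bool" where
  "lmo_step lay Ni i M Xk t Xk1 \<longleftrightarrow>
     is_arg_min (\<lambda>Z. blk lay i M \<bullet> Z)
       (\<lambda>Z. Z \<in> layer_space lay i \<and> Ni (Z - blk lay i Xk) \<le> t) (blk lay i Xk1)"

end

(* Write x_i for the dual norm of the i-th block of the sampled gradient at X^k.  The layer-wise
   (L0,L1) descent lemma, with relative variance bounding both the true gradient block and its
   inner product with the LMO step, shows that one step with the prescribed radius decreases f by
   at least (1 - zeta)^2 / 2 * sum_i x_i^2 / (L0_i + (1 + zeta) L1_i x_i).  Telescoping, the
   expected sum of these progress terms over any number of steps is at most 2 Delta0 / (1 - zeta)^2.
   Since x^2 / (a + b x) lies above its tangent lines (2 l - l^2 b) x - l^2 a, and since the fresh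
   sample is independent of the iterate, so that by unbiasedness and Jensen E x_i dominates the
   expected dual norm of the true gradient block, every choice of layer weights l_i bounds a
   weighted sum of expected gradient norms by the progress plus sum_i l_i^2 L0_i.  Averaging over
   K iterations and choosing the common scale of the weights optimally gives both statements:
   constant weights for the first, weights proportional to 1 / L1_i for the second. *)

theory Submission
  imports Defs
begin

section \<open>Layers and their norms\<close>

lemma blk_in_layer_space: "blk lay i x \<in> layer_space lay i"
  by (simp add: blk_def layer_space_def)

lemma blk_add [simp]: "blk lay i (x + y) = blk lay i x + blk lay i y"
  and blk_diff [simp]: "blk lay i (x - y) = blk lay i x - blk lay i y"
  and blk_minus [simp]: "blk lay i (- x) = - blk lay i x"
  and blk_scaleR [simp]: "blk lay i (c *\<^sub>R x) = c *\<^sub>R blk lay i x"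
  by (simp_all add: blk_def vec_eq_iff)

lemma inner_blk_left: "z \<in> layer_space lay i \<Longrightarrow> blk lay i y \<bullet> z = y \<bullet> z"
  unfolding inner_vec_def blk_def layer_space_def by (intro sum.cong) auto

lemma norm_blk_le: "norm (blk lay i y) \<le> norm y"
  by (rule norm_le_componentwise_cart) (simp add: blk_def)

lemma inner_eq_sum_blk:
  fixes lay :: "'n::finite \<Rightarrow> nat"
  assumes "\<forall>k. lay k < p"
  shows "x \<bullet> y = (\<Sum>i<p. blk lay i x \<bullet> blk lay i y)"
proof -
  have "(\<Sum>i<p. blk lay i x \<bullet> blk lay i y) = (\<Sum>i<p. \<Sum>j\<in>UNIV. if lay j = i then x$j * y$j else 0)"
    unfolding inner_vec_def blk_def by (intro sum.cong) auto
  also have "\<dots> = (\<Sum>j\<in>UNIV. \<Sum>i<p. if lay j = i then x$j * y$j else 0)"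
    by (rule sum.swap)
  also have "\<dots> = x \<bullet> y"
    using assms by (simp add: inner_vec_def sum.delta)
  finally show ?thesis ..
qed

lemma subspace_layer_space: "subspace (layer_space lay i)"
  by (simp add: subspace_def layer_space_def)

lemma zero_in_layer_space [simp]: "0 \<in> layer_space lay i"
  by (rule subspace_0[OF subspace_layer_space])

lemma closed_layer_space: "closed (layer_space lay i :: (real^'n::finite) set)"
  by (rule closed_subspace[OF subspace_layer_space])

lemma layer_space_eq_sum_axis:
  fixes z :: "real^'n::finite"
  assumes "z \<in> layer_space lay i"
  shows "z = (\<Sum>j\<in>{j. lay j = i}. z$j *\<^sub>R axis j 1)"
  using assms
  by (auto simp: vec_eq_iff sum_component axis_def layer_space_def if_distrib cong: if_cong)

lemma axis_in_layer_space: "lay j = i \<Longrightarrow> axis j 1 \<in> layer_space lay i"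
  by (auto simp: axis_def layer_space_def)

context
  fixes V :: "'v::real_normed_vector set" and Nf :: "'v \<Rightarrow> real"
  assumes norm_on: "norm_on V Nf"
begin

lemma norm_on_nonneg: "x \<in> V \<Longrightarrow> 0 \<le> Nf x"
  and norm_on_eq_0_iff: "x \<in> V \<Longrightarrow> Nf x = 0 \<longleftrightarrow> x = 0"
  and norm_on_scaleR: "x \<in> V \<Longrightarrow> Nf (c *\<^sub>R x) = \<bar>c\<bar> * Nf x"
  and norm_on_triangle: "x \<in> V \<Longrightarrow> y \<in> V \<Longrightarrow> Nf (x + y) \<le> Nf x + Nf y"
  using norm_on by (simp_all add: norm_on_def)

lemma norm_on_minus: "x \<in> V \<Longrightarrow> Nf (- x) = Nf x"
  using norm_on_scaleR[of x "-1"] by simp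

lemma norm_on_sum:
  assumes "subspace V" "finite S" "\<And>j. j \<in> S \<Longrightarrow> v j \<in> V"
  shows "Nf (sum v S) \<le> (\<Sum>j\<in>S. Nf (v j))"
  using assms(2,3)
proof (induction S rule: finite_induct)
  case empty
  then show ?case using norm_on_eq_0_iff[OF subspace_0[OF assms(1)]] by simp
next
  case (insert x F)
  then have "Nf (v x + sum v F) \<le> Nf (v x) + Nf (sum v F)"
    by (intro norm_on_triangle) (auto intro: subspace_sum[OF assms(1)])
  with insert show ?case by simp
qed

lemma norm_on_lipschitz:
  assumes "subspace V" "C \<ge> 0" "\<forall>z\<in>V. Nf z \<le> C * norm z"
  shows "C-lipschitz_on V Nf"
proof (rule lipschitz_onI)
  fix x y assume x: "x \<in> V" and y: "y \<in> V"
  have xy: "x - y \<in> V" "y - x \<in> V" using subspace_diff[OF assms(1)] x y by auto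
  have "Nf x \<le> Nf (x - y) + Nf y" "Nf y \<le> Nf (y - x) + Nf x"
    using norm_on_triangle[OF xy(1) y] norm_on_triangle[OF xy(2) x] by simp_all
  moreover have "Nf (y - x) = Nf (x - y)" using norm_on_minus[OF xy(1)] by simp
  moreover have "Nf (x - y) \<le> C * norm (x - y)" using assms(3) xy(1) by blast
  ultimately show "dist (Nf x) (Nf y) \<le> C * dist x y" by (simp add: dist_real_def dist_norm)
qed (fact assms(2))

end

lemma norm_on_layer_space_le:
  fixes lay :: "'n::finite \<Rightarrow> nat"
  assumes norm_on: "norm_on (layer_space lay i) Nf"
  obtains C where "C \<ge> 0" "\<forall>z\<in>layer_space lay i. Nf z \<le> C * norm z"
proof
  let ?J = "{j. lay j = i}"
  show "(\<Sum>j\<in>?J. Nf (axis j 1)) \<ge> 0"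
    using norm_on_nonneg[OF norm_on] axis_in_layer_space by (intro sum_nonneg) auto
  show "\<forall>z\<in>layer_space lay i. Nf z \<le> (\<Sum>j\<in>?J. Nf (axis j 1)) * norm z"
  proof
    fix z assume z: "z \<in> layer_space lay i"
    have "Nf z = Nf (\<Sum>j\<in>?J. z$j *\<^sub>R axis j 1)" using layer_space_eq_sum_axis[OF z] by simp
    also have "\<dots> \<le> (\<Sum>j\<in>?J. Nf (z$j *\<^sub>R axis j 1))"
      by (rule norm_on_sum[OF norm_on subspace_layer_space])
        (auto intro: subspace_scale[OF subspace_layer_space] axis_in_layer_space)
    also have "\<dots> = (\<Sum>j\<in>?J. \<bar>z$j\<bar> * Nf (axis j 1))"
      by (intro sum.cong refl norm_on_scaleR[OF norm_on]) (auto intro: axis_in_layer_space)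
    also have "\<dots> \<le> (\<Sum>j\<in>?J. norm z * Nf (axis j 1))"
      by (intro sum_mono mult_right_mono component_le_norm_cart norm_on_nonneg[OF norm_on])
        (auto intro: axis_in_layer_space)
    finally show "Nf z \<le> (\<Sum>j\<in>?J. Nf (axis j 1)) * norm z"
      by (simp add: sum_distrib_left mult.commute)
  qed
qed

text \<open>Norms on a layer are equivalent to the Euclidean norm: the minimum of the norm on
  the compact unit sphere of the layer is positive.\<close>

lemma norm_on_layer_space_ge:
  fixes lay :: "'n::finite \<Rightarrow> nat"
  assumes norm_on: "norm_on (layer_space lay i) Nf"
  obtains m where "m > 0" "\<forall>z\<in>layer_space lay i. m * norm z \<le> Nf z"
proof -
  let ?V = "layer_space lay i"
  let ?S = "?V \<inter> sphere 0 1"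
  have normalize: "(1 / norm z) *\<^sub>R z \<in> ?S" if "z \<in> ?V" "z \<noteq> 0" for z
    using that subspace_scale[OF subspace_layer_space] by auto
  show ?thesis
  proof (cases "?S = {}")
    case True
    then have "?V \<subseteq> {0}" using normalize by blast
    then show ?thesis using norm_on_nonneg[OF norm_on] by (intro that[of 1]) fastforce+
  next
    case False
    obtain C where "C \<ge> 0" "\<forall>z\<in>?V. Nf z \<le> C * norm z"
      using norm_on_layer_space_le[OF norm_on] by blast
    then have "C-lipschitz_on ?V Nf"
      by (rule norm_on_lipschitz[OF norm_on subspace_layer_space])
    then have "continuous_on ?S Nf"
      by (rule continuous_on_subset[OF lipschitz_on_continuous_on]) auto
    moreover have "compact ?S" using closed_layer_space by (intro closed_Int_compact) auto
    ultimately obtain z0 where z0: "z0 \<in> ?S" "\<forall>y\<in>?S. Nf z0 \<le> Nf y"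
      using continuous_attains_inf[OF _ False] by blast
    have "Nf z0 * norm z \<le> Nf z" if z: "z \<in> ?V" for z
    proof (cases "z = 0")
      case True then show ?thesis using norm_on_nonneg[OF norm_on z] by simp
    next
      case False
      then have "Nf z0 \<le> Nf ((1 / norm z) *\<^sub>R z)" using z0 normalize[OF z] by blast
      also have "\<dots> = Nf z / norm z" using norm_on_scaleR[OF norm_on z] by simp
      finally show ?thesis using False by (simp add: field_simps)
    qed
    moreover have "Nf z0 > 0"
      using z0(1) norm_on_eq_0_iff[OF norm_on] norm_on_nonneg[OF norm_on] by force
    ultimately show ?thesis using that by blast
  qed
qed

context
  fixes lay :: "'n::finite \<Rightarrow> nat" and Nf :: "real^'n \<Rightarrow> real" and i :: nat
  assumes norm_on: "norm_on (layer_space lay i) Nf"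
begin

lemma norm_on_layer_space_zero [simp]: "Nf 0 = 0"
  using norm_on_eq_0_iff[OF norm_on] by simp

lemma dual_norm_set_bounded:
  obtains B where "B \<ge> 0"
    "\<And>y z. z \<in> layer_space lay i \<Longrightarrow> Nf z \<le> 1 \<Longrightarrow> blk lay i y \<bullet> z \<le> B * norm y"
proof -
  obtain m where m: "m > 0" "\<forall>z\<in>layer_space lay i. m * norm z \<le> Nf z"
    using norm_on_layer_space_ge[OF norm_on] by blast
  have "blk lay i y \<bullet> z \<le> (1 / m) * norm y" if "z \<in> layer_space lay i" "Nf z \<le> 1" for y z
  proof -
    have "m * norm z \<le> 1" using m that by force
    then have "norm z \<le> 1 / m" using m(1) by (simp add: field_simps)
    then have "norm (blk lay i y) * norm z \<le> norm y * (1 / m)"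
      by (intro mult_mono norm_blk_le) auto
    then show ?thesis using norm_cauchy_schwarz[of "blk lay i y" z] by simp
  qed
  then show ?thesis using m(1) that[of "1 / m"] by simp
qed

lemma bdd_above_dual_norm_set:
  "bdd_above {blk lay i y \<bullet> z | z. z \<in> layer_space lay i \<and> Nf z \<le> 1}"
proof -
  obtain B where "\<And>z. z \<in> layer_space lay i \<Longrightarrow> Nf z \<le> 1 \<Longrightarrow> blk lay i y \<bullet> z \<le> B * norm y"
    using dual_norm_set_bounded by metis
  then show ?thesis by (auto intro!: bdd_aboveI[of _ "B * norm y"])
qed

lemma inner_le_dual_norm:
  "z \<in> layer_space lay i \<Longrightarrow> Nf z \<le> 1 \<Longrightarrow> blk lay i y \<bullet> z \<le> dual_norm lay Nf i y"
  unfolding dual_norm_def by (rule cSup_upper[OF _ bdd_above_dual_norm_set]) auto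

lemma dual_norm_nonneg: "0 \<le> dual_norm lay Nf i y"
  using inner_le_dual_norm[of 0 y] by simp

lemma dual_norm_le:
  assumes "\<And>z. z \<in> layer_space lay i \<Longrightarrow> Nf z \<le> 1 \<Longrightarrow> blk lay i y \<bullet> z \<le> c"
  shows "dual_norm lay Nf i y \<le> c"
  unfolding dual_norm_def using assms zero_in_layer_space norm_on_layer_space_zero
  by (intro cSup_least) fastforce+

lemma inner_le_dual_norm_mult:
  assumes z: "z \<in> layer_space lay i"
  shows "blk lay i y \<bullet> z \<le> dual_norm lay Nf i y * Nf z"
proof (cases "z = 0")
  case False
  then have pos: "Nf z > 0"
    using norm_on_nonneg[OF norm_on z] norm_on_eq_0_iff[OF norm_on z] by simp
  have "blk lay i y \<bullet> ((1 / Nf z) *\<^sub>R z) \<le> dual_norm lay Nf i y"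
    using z pos norm_on_scaleR[OF norm_on z]
    by (intro inner_le_dual_norm) (auto intro: subspace_scale[OF subspace_layer_space])
  then show ?thesis using pos by (simp add: field_simps)
qed (simp add: dual_norm_nonneg)

lemma dual_norm_le_const_norm:
  obtains B where "B \<ge> 0" "\<And>y. dual_norm lay Nf i y \<le> B * norm y"
  using dual_norm_set_bounded dual_norm_le by metis

lemma dual_norm_triangle: "dual_norm lay Nf i (x + y) \<le> dual_norm lay Nf i x + dual_norm lay Nf i y"
  using inner_le_dual_norm by (intro dual_norm_le) (simp add: inner_add_left add_mono)

lemma dual_norm_minus [simp]: "dual_norm lay Nf i (- y) = dual_norm lay Nf i y"
proof -
  have le: "dual_norm lay Nf i (- y) \<le> dual_norm lay Nf i y" for y
  proof (rule dual_norm_le)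
    fix z assume z: "z \<in> layer_space lay i" "Nf z \<le> 1"
    then have "blk lay i y \<bullet> (- z) \<le> dual_norm lay Nf i y"
      using norm_on_minus[OF norm_on z(1)]
      by (intro inner_le_dual_norm) (auto intro: subspace_neg[OF subspace_layer_space])
    then show "blk lay i (- y) \<bullet> z \<le> dual_norm lay Nf i y" by simp
  qed
  show ?thesis using le[of y] le[of "- y"] by simp
qed

lemma dual_norm_commute: "dual_norm lay Nf i (x - y) = dual_norm lay Nf i (y - x)"
  using dual_norm_minus[of "x - y"] by simp

lemma continuous_on_dual_norm: "continuous_on UNIV (dual_norm lay Nf i)"
proof -
  obtain B where B: "B \<ge> 0" "\<And>y. dual_norm lay Nf i y \<le> B * norm y"
    using dual_norm_le_const_norm by blast
  have "B-lipschitz_on UNIV (dual_norm lay Nf i)"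
  proof (rule lipschitz_onI)
    fix x y :: "real^'n"
    have "dual_norm lay Nf i x \<le> dual_norm lay Nf i (x - y) + dual_norm lay Nf i y"
      "dual_norm lay Nf i y \<le> dual_norm lay Nf i (x - y) + dual_norm lay Nf i x"
      using dual_norm_triangle[of "x - y" y] dual_norm_triangle[of "y - x" x] dual_norm_commute
      by simp_all
    then show "dist (dual_norm lay Nf i x) (dual_norm lay Nf i y) \<le> B * dist x y"
      using B(2)[of "x - y"] by (simp add: dist_real_def dist_norm)
  qed (fact B(1))
  then show ?thesis by (rule lipschitz_on_continuous_on)
qed

lemma borel_measurable_dual_norm [measurable]: "dual_norm lay Nf i \<in> borel_measurable borel"
  by (rule borel_measurable_continuous_onI[OF continuous_on_dual_norm])

end

section \<open>One step of Gluon\<close>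

lemma inner_grad_increment_le:
  fixes lay :: "'n::finite \<Rightarrow> nat"
  assumes lay_range: "\<forall>k. lay k < p"
    and norms: "\<forall>i<p. norm_on (layer_space lay i) (N i)"
    and smooth: "layerwise_L0L1_smooth lay p N L0 L1 gF"
    and t: "0 \<le> t"
  shows "(gF (X + t *\<^sub>R D) - gF X) \<bullet> D
    \<le> t * (\<Sum>i<p. (L0 i + L1 i * dual_norm lay (N i) i (gF X)) * (N i (blk lay i D))\<^sup>2)"
proof -
  have "blk lay i (gF (X + t *\<^sub>R D) - gF X) \<bullet> blk lay i D
      \<le> t * ((L0 i + L1 i * dual_norm lay (N i) i (gF X)) * (N i (blk lay i D))\<^sup>2)"
    if i: "i < p" for i
  proof -
    have norm_on: "norm_on (layer_space lay i) (N i)" using norms i by simp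
    have "blk lay i (gF (X + t *\<^sub>R D) - gF X) \<bullet> blk lay i D
        = blk lay i (gF X - gF (X + t *\<^sub>R D)) \<bullet> (- blk lay i D)"
      by (simp add: inner_diff_left)
    also have "\<dots> \<le> dual_norm lay (N i) i (gF X - gF (X + t *\<^sub>R D)) * N i (blk lay i D)"
      using inner_le_dual_norm_mult[OF norm_on, of "- blk lay i D" "gF X - gF (X + t *\<^sub>R D)"]
        norm_on_minus[OF norm_on blk_in_layer_space]
      by (simp add: subspace_neg[OF subspace_layer_space] blk_in_layer_space)
    also have "\<dots> \<le> (L0 i + L1 i * dual_norm lay (N i) i (gF X))
        * N i (blk lay i X - blk lay i (X + t *\<^sub>R D)) * N i (blk lay i D)"
    proof (rule mult_right_mono)
      show "dual_norm lay (N i) i (gF X - gF (X + t *\<^sub>R D))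
          \<le> (L0 i + L1 i * dual_norm lay (N i) i (gF X)) * N i (blk lay i X - blk lay i (X + t *\<^sub>R D))"
        using smooth i unfolding layerwise_L0L1_smooth_def by blast
    qed (rule norm_on_nonneg[OF norm_on blk_in_layer_space])
    also have "blk lay i X - blk lay i (X + t *\<^sub>R D) = (- t) *\<^sub>R blk lay i D"
      by simp
    also have "N i ((- t) *\<^sub>R blk lay i D) = t * N i (blk lay i D)"
      using norm_on_scaleR[OF norm_on blk_in_layer_space, of "- t" D] t
      by (simp del: scaleR_minus_left)
    finally show ?thesis by (simp add: power2_eq_square algebra_simps)
  qed
  then have "(\<Sum>i<p. blk lay i (gF (X + t *\<^sub>R D) - gF X) \<bullet> blk lay i D)
      \<le> (\<Sum>i<p. t * ((L0 i + L1 i * dual_norm lay (N i) i (gF X)) * (N i (blk lay i D))\<^sup>2))"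
    by (intro sum_mono) simp
  then show ?thesis
    by (simp add: inner_eq_sum_blk[OF lay_range, of "gF (X + t *\<^sub>R D) - gF X"] sum_distrib_left)
qed

text \<open>The function \<open>s \<mapsto> f (X + s (Y - X)) - s \<langle>\<nabla>f X, Y - X\<rangle> - C s\<^sup>2 / 2\<close>
  is non-increasing on [0, 1].\<close>

lemma layerwise_descent:
  fixes lay :: "'n::finite \<Rightarrow> nat" and f :: "real^'n \<Rightarrow> real"
  assumes lay_range: "\<forall>k. lay k < p"
    and norms: "\<forall>i<p. norm_on (layer_space lay i) (N i)"
    and f_grad: "\<forall>X. (f has_derivative (\<lambda>h. gF X \<bullet> h)) (at X)"
    and smooth: "layerwise_L0L1_smooth lay p N L0 L1 gF"
  shows "f Y \<le> f X + gF X \<bullet> (Y - X)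
     + (\<Sum>i<p. (L0 i + L1 i * dual_norm lay (N i) i (gF X)) / 2 * (N i (blk lay i (Y - X)))\<^sup>2)"
proof -
  define D where "D = Y - X"
  define C where "C = (\<Sum>i<p. (L0 i + L1 i * dual_norm lay (N i) i (gF X)) * (N i (blk lay i D))\<^sup>2)"
  define \<phi> where "\<phi> s = f (X + s *\<^sub>R D) - s * (gF X \<bullet> D) - C / 2 * s\<^sup>2" for s
  have deriv: "(\<phi> has_real_derivative (gF (X + s *\<^sub>R D) - gF X) \<bullet> D - C * s) (at s)" for s
  proof -
    have "((\<lambda>s. X + s *\<^sub>R D) has_derivative (\<lambda>r. r *\<^sub>R D)) (at s)"
      by (auto intro!: derivative_eq_intros)
    then have "((\<lambda>s. f (X + s *\<^sub>R D)) has_derivative (\<lambda>r. gF (X + s *\<^sub>R D) \<bullet> (r *\<^sub>R D))) (at s)"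
      by (rule has_derivative_compose) (use f_grad in blast)
    then have "((\<lambda>s. f (X + s *\<^sub>R D)) has_real_derivative gF (X + s *\<^sub>R D) \<bullet> D) (at s)"
      by (rule has_derivative_imp_has_field_derivative) simp
    then show ?thesis
      unfolding \<phi>_def by (auto intro!: derivative_eq_intros simp: inner_diff_left)
  qed
  have nonpos: "(gF (X + s *\<^sub>R D) - gF X) \<bullet> D - C * s \<le> 0" if "0 \<le> s" for s
    using inner_grad_increment_le[OF lay_range norms smooth that] by (simp add: C_def mult.commute)
  have "\<phi> 1 \<le> \<phi> 0"
  proof (rule DERIV_nonpos_imp_nonincreasing[of 0 1])
    fix s :: real assume "0 \<le> s"
    then show "\<exists>y. (\<phi> has_real_derivative y) (at s) \<and> y \<le> 0" using deriv nonpos by blast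
  qed simp
  then show ?thesis
    by (simp add: \<phi>_def D_def C_def sum_divide_distrib)
qed

lemma lmo_step_le:
  fixes lay :: "'n::finite \<Rightarrow> nat"
  assumes norm_on: "norm_on (layer_space lay i) Nf" and t: "0 \<le> t"
    and step: "lmo_step lay Nf i M X t Y"
  shows "blk lay i M \<bullet> blk lay i (Y - X) \<le> - t * dual_norm lay Nf i M"
    and "Nf (blk lay i (Y - X)) \<le> t"
proof -
  let ?V = "layer_space lay i"
  have Y: "blk lay i Y \<in> ?V" "Nf (blk lay i Y - blk lay i X) \<le> t"
    and min: "\<And>Z. Z \<in> ?V \<Longrightarrow> Nf (Z - blk lay i X) \<le> t \<Longrightarrow>
                blk lay i M \<bullet> blk lay i Y \<le> blk lay i M \<bullet> Z"
    using step unfolding lmo_step_def is_arg_min_def by (auto simp: not_less)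
  show "Nf (blk lay i (Y - X)) \<le> t" using Y(2) by simp
  have compare: "t * (blk lay i M \<bullet> z) \<le> - (blk lay i M \<bullet> blk lay i (Y - X))"
    if z: "z \<in> ?V" "Nf z \<le> 1" for z
  proof -
    have "Nf ((- t) *\<^sub>R z) \<le> t"
      using norm_on_scaleR[OF norm_on z(1), of "- t"] z(2) t by (simp add: mult_left_le)
    then have "blk lay i M \<bullet> blk lay i Y \<le> blk lay i M \<bullet> (blk lay i X - t *\<^sub>R z)"
      using z by (intro min) (auto intro!: subspace_diff[OF subspace_layer_space]
          subspace_scale[OF subspace_layer_space] blk_in_layer_space)
    then show ?thesis by (simp add: inner_diff_right)
  qed
  show "blk lay i M \<bullet> blk lay i (Y - X) \<le> - t * dual_norm lay Nf i M"
  proof (cases "t = 0")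
    case True
    have "blk lay i Y - blk lay i X \<in> ?V"
      by (intro subspace_diff[OF subspace_layer_space] blk_in_layer_space)
    moreover from this have "Nf (blk lay i Y - blk lay i X) = 0"
      using Y(2) True norm_on_nonneg[OF norm_on] by (simp add: order_antisym)
    ultimately have "blk lay i (Y - X) = 0"
      using norm_on_eq_0_iff[OF norm_on] by simp
    with True show ?thesis by simp
  next
    case False
    then have "dual_norm lay Nf i M \<le> - (blk lay i M \<bullet> blk lay i (Y - X)) / t"
      using compare t by (intro dual_norm_le[OF norm_on]) (simp add: field_simps)
    then show ?thesis using False t by (simp add: field_simps)
  qed
qed

text \<open>With \<open>x = \<parallel>g\<^sub>i\<parallel>\<^sub>\<star>\<close>, relative variance gives \<open>\<parallel>\<nabla>\<^sub>if\<parallel>\<^sub>\<star> \<le> (1 + \<zeta>) x\<close> and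
  \<open>\<langle>\<nabla>\<^sub>if, \<Delta>\<rangle> \<le> -(1 - \<zeta>) t x\<close>; the radius \<open>t\<close> minimises the resulting quadratic in \<open>t\<close>.\<close>

lemma gluon_block_bound:
  fixes lay :: "'n::finite \<Rightarrow> nat" and l0 l1 :: real
  assumes norm_on: "norm_on (layer_space lay i) Nf"
    and l: "0 \<le> l0" "0 \<le> l1" and \<zeta>: "0 \<le> \<zeta>" "\<zeta> < 1"
    and rel_var: "dual_norm lay Nf i (g - G) \<le> \<zeta> * dual_norm lay Nf i g"
    and well_def: "dual_norm lay Nf i g \<noteq> 0 \<longrightarrow> l0 + (1 + \<zeta>) * l1 * dual_norm lay Nf i g \<noteq> 0"
    and step: "lmo_step lay Nf i g X
      ((1 - \<zeta>) * dual_norm lay Nf i g / (l0 + (1 + \<zeta>) * l1 * dual_norm lay Nf i g)) Y"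
  shows "blk lay i G \<bullet> blk lay i (Y - X)
      + (l0 + l1 * dual_norm lay Nf i G) / 2 * (Nf (blk lay i (Y - X)))\<^sup>2
    \<le> - ((1 - \<zeta>)\<^sup>2 / 2 * ((dual_norm lay Nf i g)\<^sup>2 / (l0 + (1 + \<zeta>) * l1 * dual_norm lay Nf i g)))"
proof -
  define x where "x = dual_norm lay Nf i g"
  define d where "d = l0 + (1 + \<zeta>) * l1 * x"
  define t where "t = (1 - \<zeta>) * x / d"
  define \<Delta> where "\<Delta> = blk lay i (Y - X)"
  have x: "0 \<le> x" unfolding x_def by (rule dual_norm_nonneg[OF norm_on])
  have d: "0 \<le> d" unfolding d_def using x l \<zeta> by simp
  have t: "0 \<le> t" unfolding t_def using d x \<zeta> by simp
  have \<Delta>: "\<Delta> \<in> layer_space lay i" "0 \<le> Nf \<Delta>"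
    unfolding \<Delta>_def using norm_on_nonneg[OF norm_on blk_in_layer_space] blk_in_layer_space
    by blast+
  have descent: "blk lay i g \<bullet> \<Delta> \<le> - t * x" and radius: "Nf \<Delta> \<le> t"
    using lmo_step_le[OF norm_on t] step unfolding t_def d_def x_def \<Delta>_def by auto
  have "blk lay i (g - G) \<bullet> (- \<Delta>) \<le> dual_norm lay Nf i (g - G) * Nf \<Delta>"
    using inner_le_dual_norm_mult[OF norm_on subspace_neg[OF subspace_layer_space \<Delta>(1)], of "g - G"]
      norm_on_minus[OF norm_on \<Delta>(1)] by simp
  also have "\<dots> \<le> \<zeta> * x * t"
    using rel_var radius \<Delta>(2) \<zeta> x unfolding x_def by (intro mult_mono) auto
  finally have inner: "blk lay i G \<bullet> \<Delta> \<le> - (1 - \<zeta>) * t * x"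
    using descent by (simp add: inner_diff_left algebra_simps)
  have "dual_norm lay Nf i G \<le> dual_norm lay Nf i (G - g) + x"
    using dual_norm_triangle[OF norm_on, of "G - g" g] unfolding x_def by simp
  then have "dual_norm lay Nf i G \<le> (1 + \<zeta>) * x"
    using rel_var dual_norm_commute[OF norm_on, of G g] unfolding x_def by (simp add: algebra_simps)
  then have "l0 + l1 * dual_norm lay Nf i G \<le> d"
    unfolding d_def using l mult_left_mono by (fastforce simp: algebra_simps)
  moreover have "0 \<le> l0 + l1 * dual_norm lay Nf i G"
    using l dual_norm_nonneg[OF norm_on] by simp
  ultimately have "(l0 + l1 * dual_norm lay Nf i G) / 2 * (Nf \<Delta>)\<^sup>2 \<le> d / 2 * t\<^sup>2"
    using radius \<Delta>(2) by (intro mult_mono divide_right_mono power_mono) auto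
  moreover have "- (1 - \<zeta>) * t * x + d / 2 * t\<^sup>2 = - ((1 - \<zeta>)\<^sup>2 / 2 * (x\<^sup>2 / d))"
  proof (cases "x = 0")
    case False
    then have "d > 0" using well_def d unfolding d_def x_def by simp
    then show ?thesis unfolding t_def by (simp add: field_simps power2_eq_square)
  qed (simp add: t_def)
  ultimately show ?thesis
    using inner unfolding \<Delta>_def d_def x_def by linarith
qed

lemma gluon_step_decrease:
  fixes lay :: "'n::finite \<Rightarrow> nat" and f :: "real^'n \<Rightarrow> real"
  assumes lay_range: "\<forall>k. lay k < p"
    and norms: "\<forall>i<p. norm_on (layer_space lay i) (N i)"
    and f_grad: "\<forall>X. (f has_derivative (\<lambda>h. gF X \<bullet> h)) (at X)"
    and smooth: "layerwise_L0L1_smooth lay p N L0 L1 gF"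
    and L_nonneg: "\<forall>i<p. 0 \<le> L0 i \<and> 0 \<le> L1 i"
    and \<zeta>: "0 \<le> \<zeta>" "\<zeta> < 1"
    and rel_var: "\<forall>i<p. dual_norm lay (N i) i (g - gF X) \<le> \<zeta> * dual_norm lay (N i) i g"
    and well_def: "\<forall>i<p. dual_norm lay (N i) i g \<noteq> 0 \<longrightarrow>
         L0 i + (1 + \<zeta>) * L1 i * dual_norm lay (N i) i g \<noteq> 0"
    and step: "\<forall>i<p. lmo_step lay (N i) i g X
           ((1 - \<zeta>) * dual_norm lay (N i) i g
             / (L0 i + (1 + \<zeta>) * L1 i * dual_norm lay (N i) i g)) Y"
  shows "f Y \<le> f X - (1 - \<zeta>)\<^sup>2 / 2 * (\<Sum>i<p. (dual_norm lay (N i) i g)\<^sup>2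
                 / (L0 i + (1 + \<zeta>) * L1 i * dual_norm lay (N i) i g))"
proof -
  have "f Y \<le> f X + (\<Sum>i<p. blk lay i (gF X) \<bullet> blk lay i (Y - X)
      + (L0 i + L1 i * dual_norm lay (N i) i (gF X)) / 2 * (N i (blk lay i (Y - X)))\<^sup>2)"
    using layerwise_descent[OF lay_range norms f_grad smooth, of Y X]
    by (simp add: inner_eq_sum_blk[OF lay_range, of "gF X"] sum.distrib)
  also have "\<dots> \<le> f X + (\<Sum>i<p. - ((1 - \<zeta>)\<^sup>2 / 2 * ((dual_norm lay (N i) i g)\<^sup>2
                 / (L0 i + (1 + \<zeta>) * L1 i * dual_norm lay (N i) i g))))"
    using norms L_nonneg \<zeta> rel_var well_def step
    by (intro add_left_mono sum_mono gluon_block_bound) auto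
  finally show ?thesis by (simp add: sum_negf sum_distrib_left)
qed

section \<open>Measurability and independence\<close>

definition grid_index :: "nat \<Rightarrow> real^'n \<Rightarrow> ('n \<Rightarrow> int)" where
  "grid_index n x = (\<lambda>j. \<lfloor>real (Suc n) * x $ j\<rfloor>)"

definition grid_point :: "nat \<Rightarrow> ('n \<Rightarrow> int) \<Rightarrow> real^'n" where
  "grid_point n r = (\<chi> j. real_of_int (r j) / real (Suc n))"

lemma measurable_grid_index:
  "grid_index n \<in> measurable (borel :: (real^'n::finite) measure) (count_space UNIV)"
proof -
  have "grid_index n -` {r} \<inter> space borel = {x::real^'n. \<forall>j. \<lfloor>real (Suc n) * x $ j\<rfloor> = r j}" for r
    by (auto simp: grid_index_def fun_eq_iff)
  then show ?thesis
    by (auto simp: measurable_count_space_eq2_countable)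
qed

lemma grid_point_grid_index_tendsto:
  "(\<lambda>n. grid_point n (grid_index n x)) \<longlonglongrightarrow> (x::real^'n::finite)"
proof (rule vec_tendstoI)
  fix j
  have "(\<lambda>n. real_of_int \<lfloor>real (Suc n) * x $ j\<rfloor> / real (Suc n)) \<longlonglongrightarrow> x $ j"
  proof (rule tendsto_sandwich[of "\<lambda>n. x $ j - 1 / real (Suc n)" _ _ "\<lambda>n. x $ j"])
    show "\<forall>\<^sub>F n in sequentially. x $ j - 1 / real (Suc n) \<le> \<lfloor>real (Suc n) * x $ j\<rfloor> / real (Suc n)"
    proof (intro always_eventually allI)
      fix n
      have "(real (Suc n) * x $ j - 1) / real (Suc n) \<le> \<lfloor>real (Suc n) * x $ j\<rfloor> / real (Suc n)"
        by (intro divide_right_mono) linarith+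
      then show "x $ j - 1 / real (Suc n) \<le> \<lfloor>real (Suc n) * x $ j\<rfloor> / real (Suc n)"
        by (simp add: diff_divide_distrib)
    qed
    show "\<forall>\<^sub>F n in sequentially. \<lfloor>real (Suc n) * x $ j\<rfloor> / real (Suc n) \<le> x $ j"
    proof (intro always_eventually allI)
      fix n
      have "\<lfloor>real (Suc n) * x $ j\<rfloor> / real (Suc n) \<le> real (Suc n) * x $ j / real (Suc n)"
        by (intro divide_right_mono) linarith+
      then show "\<lfloor>real (Suc n) * x $ j\<rfloor> / real (Suc n) \<le> x $ j" by simp
    qed
    have "(\<lambda>n. 1 / real (Suc n)) \<longlonglongrightarrow> 0"
      using LIMSEQ_Suc[OF lim_inverse_n'] by (simp add: divide_inverse)
    then show "(\<lambda>n. x $ j - 1 / real (Suc n)) \<longlonglongrightarrow> x $ j"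
      using tendsto_diff[OF tendsto_const, of _ 0] by simp
  qed simp
  then show "(\<lambda>n. grid_point n (grid_index n x) $ j) \<longlonglongrightarrow> x $ j"
    by (simp add: grid_point_def grid_index_def)
qed

text \<open>A Caratheodory function (measurable in the sample, continuous in the point) is jointly
  measurable: it is the pointwise limit of its evaluations on the grids of mesh \<open>1 / (n + 1)\<close>,
  each of which has countably many values in the point.\<close>

lemma caratheodory_borel_measurable:
  fixes g :: "'a \<Rightarrow> real^'n::finite \<Rightarrow> 'b::metric_space"
  assumes measurable: "\<And>x. (\<lambda>\<xi>. g \<xi> x) \<in> borel_measurable D"
    and continuous: "\<And>\<xi>. \<xi> \<in> space D \<Longrightarrow> continuous_on UNIV (g \<xi>)"
  shows "(\<lambda>(x, \<xi>). g \<xi> x) \<in> borel_measurable (borel \<Otimes>\<^sub>M D)"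
proof (rule borel_measurable_LIMSEQ_metric)
  fix n
  show "(\<lambda>z. g (snd z) (grid_point n (grid_index n (fst z)))) \<in> borel_measurable (borel \<Otimes>\<^sub>M D)"
  proof (rule measurable_compose_countable[where f = "\<lambda>r z. g (snd z) (grid_point n r)"])
    show "(\<lambda>z. g (snd z) (grid_point n r)) \<in> borel_measurable (borel \<Otimes>\<^sub>M D)" for r :: "'n \<Rightarrow> int"
      using measurable by measurable
    show "(\<lambda>z. grid_index n (fst z)) \<in> measurable (borel \<Otimes>\<^sub>M D) (count_space UNIV)"
      using measurable_grid_index by measurable
  qed
next
  fix z :: "(real^'n) \<times> 'a" assume "z \<in> space (borel \<Otimes>\<^sub>M D)"
  then have "snd z \<in> space D" by (auto simp: space_pair_measure)
  then have "isCont (g (snd z)) (fst z)"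
    using continuous by (simp add: continuous_on_eq_continuous_at)
  then show "(\<lambda>n. g (snd z) (grid_point n (grid_index n (fst z)))) \<longlonglongrightarrow> (case z of (x, \<xi>) \<Rightarrow> g \<xi> x)"
    using isCont_tendsto_compose[OF _ grid_point_grid_index_tendsto] by (auto split: prod.split)
qed

lemma dual_norm_integral_le:
  fixes lay :: "'n::finite \<Rightarrow> nat" and g :: "'a \<Rightarrow> real^'n"
  assumes norm_on: "norm_on (layer_space lay i) Nf" and integrable: "integrable D g"
  shows "ennreal (dual_norm lay Nf i (\<integral>\<xi>. g \<xi> \<partial>D)) \<le> (\<integral>\<^sup>+ \<xi>. ennreal (dual_norm lay Nf i (g \<xi>)) \<partial>D)"
proof -
  obtain B where B: "B \<ge> 0" "\<And>y. dual_norm lay Nf i y \<le> B * norm y"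
    using dual_norm_le_const_norm[OF norm_on] by blast
  have integrable_dual: "integrable D (\<lambda>\<xi>. dual_norm lay Nf i (g \<xi>))"
  proof (rule Bochner_Integration.integrable_bound)
    show "integrable D (\<lambda>\<xi>. B * norm (g \<xi>))" using integrable by auto
    show "(\<lambda>\<xi>. dual_norm lay Nf i (g \<xi>)) \<in> borel_measurable D"
      using measurable_compose[OF borel_measurable_integrable[OF integrable]
          borel_measurable_dual_norm[OF norm_on]] .
    show "AE \<xi> in D. norm (dual_norm lay Nf i (g \<xi>)) \<le> norm (B * norm (g \<xi>))"
      using B dual_norm_nonneg[OF norm_on] by (auto intro!: AE_I2)
  qed
  have "dual_norm lay Nf i (\<integral>\<xi>. g \<xi> \<partial>D) \<le> (\<integral>\<xi>. dual_norm lay Nf i (g \<xi>) \<partial>D)"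
  proof (rule dual_norm_le[OF norm_on])
    fix z assume z: "z \<in> layer_space lay i" "Nf z \<le> 1"
    have "g \<xi> \<bullet> z \<le> dual_norm lay Nf i (g \<xi>)" for \<xi>
      using inner_le_dual_norm[OF norm_on z] inner_blk_left[OF z(1)] by metis
    then have "(\<integral>\<xi>. g \<xi> \<bullet> z \<partial>D) \<le> (\<integral>\<xi>. dual_norm lay Nf i (g \<xi>) \<partial>D)"
      using integrable integrable_dual by (intro integral_mono) auto
    then show "blk lay i (\<integral>\<xi>. g \<xi> \<partial>D) \<bullet> z \<le> (\<integral>\<xi>. dual_norm lay Nf i (g \<xi>) \<partial>D)"
      using integrable by (simp add: inner_blk_left[OF z(1)])
  qed
  then show ?thesis
    using integrable_dual dual_norm_nonneg[OF norm_on]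
    by (simp add: nn_integral_eq_integral ennreal_leI)
qed

lemma (in prob_space) distr_pair_eq_of_indep_set:
  assumes X: "random_variable S X" and Y: "random_variable T Y"
    and indep: "indep_set {X -` A \<inter> space M | A. A \<in> sets S} {Y -` B \<inter> space M | B. B \<in> sets T}"
  shows "distr M (S \<Otimes>\<^sub>M T) (\<lambda>\<omega>. (X \<omega>, Y \<omega>)) = distr M S X \<Otimes>\<^sub>M distr M T Y"
proof (rule pair_measure_eqI[symmetric])
  interpret X: prob_space "distr M S X" by (rule prob_space_distr[OF X])
  interpret Y: prob_space "distr M T Y" by (rule prob_space_distr[OF Y])
  show "sigma_finite_measure (distr M S X)" "sigma_finite_measure (distr M T Y)" ..
  fix A B assume A: "A \<in> sets (distr M S X)" and B: "B \<in> sets (distr M T Y)"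
  have XY: "random_variable (S \<Otimes>\<^sub>M T) (\<lambda>\<omega>. (X \<omega>, Y \<omega>))" using X Y by measurable
  have "(\<lambda>\<omega>. (X \<omega>, Y \<omega>)) -` (A \<times> B) \<inter> space M = (X -` A \<inter> space M) \<inter> (Y -` B \<inter> space M)"
    by blast
  moreover have "prob ((X -` A \<inter> space M) \<inter> (Y -` B \<inter> space M))
      = prob (X -` A \<inter> space M) * prob (Y -` B \<inter> space M)"
    using A B by (intro indep_setD[OF indep]) auto
  ultimately show "emeasure (distr M S X) A * emeasure (distr M T Y) B
      = emeasure (distr M (S \<Otimes>\<^sub>M T) (\<lambda>\<omega>. (X \<omega>, Y \<omega>))) (A \<times> B)"
    using A B X Y XY by (simp add: emeasure_distr emeasure_eq_measure ennreal_mult)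
qed simp

lemma (in prob_space) nn_integral_indep_set:
  assumes X: "random_variable S X" and Y: "random_variable T Y"
    and indep: "indep_set {X -` A \<inter> space M | A. A \<in> sets S} {Y -` B \<inter> space M | B. B \<in> sets T}"
    and h: "(\<lambda>(x, y). h x y) \<in> borel_measurable (S \<Otimes>\<^sub>M T)"
  shows "(\<integral>\<^sup>+ \<omega>. h (X \<omega>) (Y \<omega>) \<partial>M) = (\<integral>\<^sup>+ y. \<integral>\<^sup>+ x. h x y \<partial>distr M S X \<partial>distr M T Y)"
proof -
  interpret X: prob_space "distr M S X" by (rule prob_space_distr[OF X])
  interpret Y: prob_space "distr M T Y" by (rule prob_space_distr[OF Y])
  interpret pair_sigma_finite "distr M S X" "distr M T Y" by intro_locales
  have "sets (distr M S X \<Otimes>\<^sub>M distr M T Y) = sets (S \<Otimes>\<^sub>M T)"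
    by (rule sets_pair_measure_cong) simp_all
  then have h': "(\<lambda>(x, y). h x y) \<in> borel_measurable (distr M S X \<Otimes>\<^sub>M distr M T Y)"
    using h measurable_cong_sets by blast
  have "(\<integral>\<^sup>+ y. \<integral>\<^sup>+ x. h x y \<partial>distr M S X \<partial>distr M T Y)
      = integral\<^sup>N (distr M S X \<Otimes>\<^sub>M distr M T Y) (\<lambda>(x, y). h x y)"
    using nn_integral_snd[OF h'] by simp
  also have "\<dots> = integral\<^sup>N (distr M (S \<Otimes>\<^sub>M T) (\<lambda>\<omega>. (X \<omega>, Y \<omega>))) (\<lambda>(x, y). h x y)"
    by (simp only: distr_pair_eq_of_indep_set[OF X Y indep])
  also have "\<dots> = (\<integral>\<^sup>+ \<omega>. h (X \<omega>) (Y \<omega>) \<partial>M)"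
    using h X Y by (subst nn_integral_distr) auto
  finally show ?thesis ..
qed

text \<open>From \<open>(x - l (a + b x))\<^sup>2 \<ge> 0\<close>.\<close>

lemma sq_div_affine_ge_tangent:
  fixes a b l x :: real
  assumes "0 \<le> a" "0 \<le> b" "0 \<le> x" "x \<noteq> 0 \<longrightarrow> a + b * x \<noteq> 0"
  shows "(2 * l - l\<^sup>2 * b) * x \<le> x\<^sup>2 / (a + b * x) + l\<^sup>2 * a"
proof (cases "x = 0")
  case False
  define d where "d = a + b * x"
  have d: "d > 0" using assms False unfolding d_def
    by (metis add_nonneg_nonneg less_eq_real_def mult_nonneg_nonneg)
  have "2 * l * x * d - l\<^sup>2 * d * d \<le> x\<^sup>2"
    using zero_le_power2[of "x - l * d"] by (simp add: power2_eq_square algebra_simps)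
  then have "2 * l * x - l\<^sup>2 * d \<le> x\<^sup>2 / d"
    using d by (simp add: field_simps)
  then show ?thesis unfolding d_def by (simp add: algebra_simps)
qed (use assms in simp)

lemma exists_balancing_weight:
  fixes u A \<beta> Q :: real and K :: nat
  assumes u: "0 < u" and A: "0 \<le> A" and \<beta>: "0 \<le> \<beta>"
    and K: "K = nat \<lceil>Q * (A / u\<^sup>2 + \<beta> / u)\<rceil>" "1 \<le> K"
  obtains \<mu> where "0 < 2 * \<mu> - \<mu>\<^sup>2 * \<beta>"
    and "Q + real K * (\<mu>\<^sup>2 * A) \<le> real K * ((2 * \<mu> - \<mu>\<^sup>2 * \<beta>) * u)"
proof -
  define d where "d = A + \<beta> * u"
  have ratio: "A / u\<^sup>2 + \<beta> / u = d / u\<^sup>2"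
    using u unfolding d_def by (simp add: field_simps power2_eq_square)
  have d: "0 < d"
  proof (rule ccontr)
    assume "\<not> 0 < d"
    then have "d = 0" using A \<beta> u unfolding d_def by (smt (verit) mult_nonneg_nonneg)
    then show False using K by (simp add: ratio)
  qed
  define \<mu> where "\<mu> = u / d"
  have \<mu>: "0 < \<mu>" "\<mu> * d = u" unfolding \<mu>_def using u d by simp_all
  have "0 < 2 * A + \<beta> * u" using d A unfolding d_def by linarith
  then have "0 < \<mu> * (2 * A + \<beta> * u) / d" using \<mu> d by simp
  also have "\<mu> * (2 * A + \<beta> * u) / d = 2 * \<mu> - \<mu>\<^sup>2 * \<beta>"
    using \<mu> d unfolding d_def by (simp add: field_simps power2_eq_square)
  finally have positive: "0 < 2 * \<mu> - \<mu>\<^sup>2 * \<beta>" .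
  have "(2 * \<mu> - \<mu>\<^sup>2 * \<beta>) * u - \<mu>\<^sup>2 * A = 2 * \<mu> * u - \<mu> * (\<mu> * d)"
    unfolding d_def by (simp add: power2_eq_square algebra_simps)
  also have "\<dots> = u\<^sup>2 / d" using \<mu>(2) by (simp add: \<mu>_def power2_eq_square)
  finally have gain: "(2 * \<mu> - \<mu>\<^sup>2 * \<beta>) * u - \<mu>\<^sup>2 * A = u\<^sup>2 / d" .
  have "Q * (d / u\<^sup>2) \<le> real K"
    using K(1) ratio by (simp add: real_nat_ceiling_ge)
  then have "Q \<le> real K * (u\<^sup>2 / d)"
    using d u by (simp add: field_simps)
  also have "\<dots> = real K * ((2 * \<mu> - \<mu>\<^sup>2 * \<beta>) * u - \<mu>\<^sup>2 * A)" by (simp only: gain)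
  finally show ?thesis
    using positive that by (simp add: algebra_simps)
qed

lemma Min_le_of_sum_bound:
  fixes S E :: "nat \<Rightarrow> ennreal" and c r Q \<epsilon> :: real and K :: nat
  assumes K: "1 \<le> K" and c: "0 < c" and r: "0 \<le> r" and Q: "0 \<le> Q" and \<epsilon>: "0 \<le> \<epsilon>"
    and step: "\<And>k. k < K \<Longrightarrow> ennreal c * S k \<le> E k + ennreal r"
    and sum_E: "(\<Sum>k<K. E k) \<le> ennreal Q"
    and budget: "Q + real K * r \<le> real K * c * \<epsilon>"
  shows "Min (S ` {..<K}) \<le> ennreal \<epsilon>"
proof -
  define m where "m = Min (S ` {..<K})"
  have "m \<le> S k" if "k < K" for k unfolding m_def using that by (intro Min_le) auto
  then have "(\<Sum>k<K. ennreal c * m) \<le> (\<Sum>k<K. E k + ennreal r)"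
    by (intro sum_mono order_trans[OF mult_left_mono step]) auto
  also have "\<dots> = (\<Sum>k<K. E k) + of_nat K * ennreal r" by (simp add: sum.distrib)
  also have "\<dots> \<le> ennreal Q + ennreal (real K * r)"
    using sum_E by (intro add_mono) (auto simp: ennreal_of_nat_eq_real_of_nat ennreal_mult r)
  also have "\<dots> = ennreal (Q + real K * r)" using Q r by simp
  also have "\<dots> \<le> ennreal (real K * c * \<epsilon>)" using budget by (rule ennreal_leI)
  finally have "ennreal (real K * c) * m \<le> ennreal (real K * c) * ennreal \<epsilon>"
    using c \<epsilon> by (simp add: ennreal_of_nat_eq_real_of_nat ennreal_mult mult.assoc)
  moreover have "ennreal (real K * c) \<noteq> 0" using K c by simp
  ultimately show ?thesis unfolding m_def using ennreal_mult_le_mult_iff by auto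
qed

section \<open>The stochastic Gluon iteration\<close>

text \<open>The hypotheses of the theorem, except those relating \<open>f\<close> to the \<open>f\<^sub>\<xi>\<close>, which
  the argument does not use: it only needs the unbiasedness and continuity of the sampled gradients.\<close>

locale stochastic_gluon =
  M: prob_space M + D: prob_space D
  for M :: "'w measure" and D :: "'a measure" +
  fixes lay :: "'n::finite \<Rightarrow> nat" and p :: nat and N :: "nat \<Rightarrow> real^'n \<Rightarrow> real"
    and gs :: "'a \<Rightarrow> real^'n \<Rightarrow> real^'n" and f :: "real^'n \<Rightarrow> real" and gF :: "real^'n \<Rightarrow> real^'n"
    and L0 L1 :: "nat \<Rightarrow> real" and \<zeta> :: real
    and \<xi> :: "nat \<Rightarrow> 'w \<Rightarrow> 'a" and Xs :: "nat \<Rightarrow> 'w \<Rightarrow> real^'n" and X0 :: "real^'n"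
  assumes lay_range: "\<forall>k. lay k < p"
    and norms: "\<forall>i<p. norm_on (layer_space lay i) (N i)"
    and gs_continuous: "\<forall>\<xi>\<in>space D. continuous_on UNIV (gs \<xi>)"
    and f_grad: "\<forall>X. (f has_derivative (\<lambda>h. gF X \<bullet> h)) (at X)"
    and f_bdd: "bdd_below (range f)"
    and L_nonneg: "\<forall>i<p. 0 \<le> L0 i \<and> 0 \<le> L1 i"
    and smooth: "layerwise_L0L1_smooth lay p N L0 L1 gF"
    and unbiased: "\<forall>X. integrable D (\<lambda>\<xi>. gs \<xi> X) \<and> (\<integral>\<xi>. gs \<xi> X \<partial>D) = gF X"
    and zeta: "0 \<le> \<zeta>" "\<zeta> < 1"
    and rel_var: "AE \<xi>' in D. \<forall>X. \<forall>i<p.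
         dual_norm lay (N i) i (gs \<xi>' X - gF X) \<le> \<zeta> * dual_norm lay (N i) i (gs \<xi>' X)"
    and xi_rv: "\<forall>k. \<xi> k \<in> measurable M D \<and> distr M D (\<xi> k) = D"
    and Xs_rv: "\<forall>k. Xs k \<in> borel_measurable M"
    and xi_indep: "\<forall>k. M.indep_set
         {\<xi> k -` A \<inter> space M | A. A \<in> sets D}
         {(\<lambda>\<omega>. (restrict (\<lambda>j. Xs j \<omega>) {..k}, restrict (\<lambda>j. \<xi> j \<omega>) {..<k})) -` B \<inter> space M
           | B. B \<in> sets (PiM {..k} (\<lambda>_. borel) \<Otimes>\<^sub>M PiM {..<k} (\<lambda>_. D))}"
    and X_init: "\<forall>\<omega>\<in>space M. Xs 0 \<omega> = X0"
    and well_def: "\<forall>k. \<forall>\<omega>\<in>space M. \<forall>i<p.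
         dual_norm lay (N i) i (gs (\<xi> k \<omega>) (Xs k \<omega>)) \<noteq> 0 \<longrightarrow>
         L0 i + (1 + \<zeta>) * L1 i * dual_norm lay (N i) i (gs (\<xi> k \<omega>) (Xs k \<omega>)) \<noteq> 0"
    and gluon: "\<forall>k. \<forall>\<omega>\<in>space M. \<forall>i<p.
         lmo_step lay (N i) i (gs (\<xi> k \<omega>) (Xs k \<omega>)) (Xs k \<omega>)
           ((1 - \<zeta>) * dual_norm lay (N i) i (gs (\<xi> k \<omega>) (Xs k \<omega>))
             / (L0 i + (1 + \<zeta>) * L1 i * dual_norm lay (N i) i (gs (\<xi> k \<omega>) (Xs k \<omega>))))
           (Xs (Suc k) \<omega>)"
begin

definition sgrad_norm :: "nat \<Rightarrow> nat \<Rightarrow> 'w \<Rightarrow> real" where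
  "sgrad_norm i k \<omega> = dual_norm lay (N i) i (gs (\<xi> k \<omega>) (Xs k \<omega>))"

definition grad_norm :: "nat \<Rightarrow> nat \<Rightarrow> 'w \<Rightarrow> real" where
  "grad_norm i k \<omega> = dual_norm lay (N i) i (gF (Xs k \<omega>))"

text \<open>Twice the guaranteed decrease of \<open>f\<close> in layer \<open>i\<close> at step \<open>k\<close>, divided by
  \<open>(1 - \<zeta>)\<^sup>2\<close>.\<close>

definition block_progress :: "nat \<Rightarrow> nat \<Rightarrow> 'w \<Rightarrow> real" where
  "block_progress i k \<omega> = (sgrad_norm i k \<omega>)\<^sup>2 / (L0 i + (1 + \<zeta>) * L1 i * sgrad_norm i k \<omega>)"

definition progress :: "nat \<Rightarrow> 'w \<Rightarrow> real" where
  "progress k \<omega> = (\<Sum>i<p. block_progress i k \<omega>)"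

definition initial_gap :: real where
  "initial_gap = f X0 - Inf (range f)"

lemma norm_on_layer: "i < p \<Longrightarrow> norm_on (layer_space lay i) (N i)"
  using norms by simp

lemma sgrad_norm_nonneg: "i < p \<Longrightarrow> 0 \<le> sgrad_norm i k \<omega>"
  unfolding sgrad_norm_def by (rule dual_norm_nonneg[OF norm_on_layer])

lemma block_progress_nonneg: "i < p \<Longrightarrow> 0 \<le> block_progress i k \<omega>"
  using sgrad_norm_nonneg[of i k \<omega>] L_nonneg zeta by (simp add: block_progress_def)

lemma progress_nonneg: "0 \<le> progress k \<omega>"
  unfolding progress_def by (auto intro!: sum_nonneg block_progress_nonneg)

lemma initial_gap_nonneg: "0 \<le> initial_gap"
  unfolding initial_gap_def using cInf_lower[OF _ f_bdd, of "f X0"] by simp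

lemma borel_measurable_gs: "(\<lambda>(x, \<xi>). gs \<xi> x) \<in> borel_measurable (borel \<Otimes>\<^sub>M D)"
  using unbiased gs_continuous
  by (intro caratheodory_borel_measurable) (auto intro: borel_measurable_integrable)

lemma borel_measurable_gF: "gF \<in> borel_measurable borel"
proof -
  have "(\<lambda>X. \<integral>\<xi>. gs \<xi> X \<partial>D) \<in> borel_measurable borel"
    using D.borel_measurable_lebesgue_integral[of "\<lambda>X \<xi>. gs \<xi> X" borel] borel_measurable_gs
    by simp
  then show ?thesis using unbiased by simp
qed

lemma borel_measurable_sgrad_norm: "i < p \<Longrightarrow> sgrad_norm i k \<in> borel_measurable M"
  unfolding sgrad_norm_def
  using measurable_compose[OF measurable_Pair[of "Xs k" M borel "\<xi> k" D] borel_measurable_gs]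
    Xs_rv xi_rv borel_measurable_dual_norm[OF norm_on_layer]
  by simp

lemma borel_measurable_block_progress: "i < p \<Longrightarrow> block_progress i k \<in> borel_measurable M"
  unfolding block_progress_def using borel_measurable_sgrad_norm by measurable

lemma borel_measurable_progress: "progress k \<in> borel_measurable M"
  unfolding progress_def using borel_measurable_block_progress by measurable

lemma indep_set_sample_iterate:
  "M.indep_set {\<xi> k -` A \<inter> space M | A. A \<in> sets D} {Xs k -` B \<inter> space M | B. B \<in> sets borel}"
proof (rule M.indep_setI)
  show "{\<xi> k -` A \<inter> space M | A. A \<in> sets D} \<subseteq> M.events"
    "{Xs k -` B \<inter> space M | B. B \<in> sets borel} \<subseteq> M.events"
    using xi_rv Xs_rv by (auto intro!: measurable_sets)
  let ?H = "PiM {..k} (\<lambda>_. borel :: (real^'n) measure) \<Otimes>\<^sub>M PiM {..<k} (\<lambda>_. D)"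
  define history where "history \<omega> = (restrict (\<lambda>j. Xs j \<omega>) {..k}, restrict (\<lambda>j. \<xi> j \<omega>) {..<k})"
    for \<omega>
  have history: "history \<in> measurable M ?H"
    unfolding history_def using Xs_rv xi_rv by (intro measurable_Pair measurable_restrict) auto
  have current: "(\<lambda>z. fst z k) \<in> measurable ?H borel"
    by (auto intro: measurable_compose[OF measurable_fst measurable_component_singleton])
  fix a b
  assume a: "a \<in> {\<xi> k -` A \<inter> space M | A. A \<in> sets D}"
    and "b \<in> {Xs k -` B \<inter> space M | B. B \<in> sets borel}"
  then obtain B where B: "B \<in> sets borel" "b = Xs k -` B \<inter> space M" by blast
  have "b = history -` ((\<lambda>z. fst z k) -` B \<inter> space ?H) \<inter> space M"
    using B(2) measurable_space[OF history] by (auto simp: history_def)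
  moreover have "(\<lambda>z. fst z k) -` B \<inter> space ?H \<in> sets ?H"
    using measurable_sets[OF current B(1)] .
  ultimately have "b \<in> {history -` C \<inter> space M | C. C \<in> sets ?H}" by blast
  then show "M.prob (a \<inter> b) = M.prob a * M.prob b"
    unfolding history_def using M.indep_setD[OF xi_indep[rule_format, of k] a] by blast
qed

text \<open>Conditionally on the iterate, the sample is fresh; by unbiasedness and convexity of the
  dual norm, \<open>\<parallel>\<nabla>\<^sub>if(X)\<parallel>\<^sub>\<star> \<le> E\<^sub>\<xi> \<parallel>\<nabla>\<^sub>if\<^sub>\<xi>(X)\<parallel>\<^sub>\<star>\<close> at every point \<open>X\<close>.\<close>

lemma expected_grad_norm_le:
  assumes i: "i < p"
  shows "(\<integral>\<^sup>+ \<omega>. ennreal (grad_norm i k \<omega>) \<partial>M) \<le> (\<integral>\<^sup>+ \<omega>. ennreal (sgrad_norm i k \<omega>) \<partial>M)"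
proof -
  have h: "(\<lambda>(\<xi>', x). ennreal (dual_norm lay (N i) i (gs \<xi>' x))) \<in> borel_measurable (D \<Otimes>\<^sub>M borel)"
    using measurable_pair_swap[OF borel_measurable_gs] borel_measurable_dual_norm[OF norm_on_layer[OF i]]
    by (simp add: case_prod_beta')
  have "(\<integral>\<^sup>+ \<omega>. ennreal (grad_norm i k \<omega>) \<partial>M)
      = (\<integral>\<^sup>+ x. ennreal (dual_norm lay (N i) i (gF x)) \<partial>distr M borel (Xs k))"
    unfolding grad_norm_def using Xs_rv borel_measurable_gF borel_measurable_dual_norm[OF norm_on_layer[OF i]]
    by (subst nn_integral_distr) auto
  also have "\<dots> \<le> (\<integral>\<^sup>+ x. \<integral>\<^sup>+ \<xi>'. ennreal (dual_norm lay (N i) i (gs \<xi>' x)) \<partial>D \<partial>distr M borel (Xs k))"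
  proof (rule nn_integral_mono)
    fix x
    show "ennreal (dual_norm lay (N i) i (gF x)) \<le> (\<integral>\<^sup>+ \<xi>'. ennreal (dual_norm lay (N i) i (gs \<xi>' x)) \<partial>D)"
      using dual_norm_integral_le[OF norm_on_layer[OF i], of D "\<lambda>\<xi>'. gs \<xi>' x"] unbiased by simp
  qed
  also have "\<dots> = (\<integral>\<^sup>+ \<omega>. ennreal (sgrad_norm i k \<omega>) \<partial>M)"
    using M.nn_integral_indep_set[OF _ _ indep_set_sample_iterate h] xi_rv Xs_rv
    by (simp add: sgrad_norm_def)
  finally show ?thesis .
qed

lemma AE_relative_variance:
  "AE \<omega> in M. \<forall>k. \<forall>i<p. dual_norm lay (N i) i (gs (\<xi> k \<omega>) (Xs k \<omega>) - gF (Xs k \<omega>))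
      \<le> \<zeta> * dual_norm lay (N i) i (gs (\<xi> k \<omega>) (Xs k \<omega>))"
proof (subst AE_all_countable, intro allI)
  fix k
  have "AE \<xi>' in distr M D (\<xi> k). \<forall>X. \<forall>i<p.
      dual_norm lay (N i) i (gs \<xi>' X - gF X) \<le> \<zeta> * dual_norm lay (N i) i (gs \<xi>' X)"
    using rel_var xi_rv by (simp only:)
  from AE_distrD[OF _ this] xi_rv
  show "AE \<omega> in M. \<forall>i<p. dual_norm lay (N i) i (gs (\<xi> k \<omega>) (Xs k \<omega>) - gF (Xs k \<omega>))
      \<le> \<zeta> * dual_norm lay (N i) i (gs (\<xi> k \<omega>) (Xs k \<omega>))"
    by auto
qed

lemma AE_sum_progress_le:
  "AE \<omega> in M. (\<Sum>k<K. progress k \<omega>) \<le> 2 * initial_gap / (1 - \<zeta>)\<^sup>2"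
  using AE_relative_variance AE_space
proof eventually_elim
  case (elim \<omega>)
  have decrease: "f (Xs (Suc k) \<omega>) \<le> f (Xs k \<omega>) - (1 - \<zeta>)\<^sup>2 / 2 * progress k \<omega>" for k
    using gluon_step_decrease[OF lay_range norms f_grad smooth L_nonneg zeta] elim well_def gluon
    unfolding progress_def block_progress_def sgrad_norm_def by blast
  have "f (Xs K \<omega>) \<le> f X0 - (1 - \<zeta>)\<^sup>2 / 2 * (\<Sum>k<K. progress k \<omega>)"
  proof (induction K)
    case 0
    then show ?case using X_init elim by simp
  next
    case (Suc K)
    then show ?case using decrease[of K] by (simp add: distrib_left)
  qed
  moreover have "Inf (range f) \<le> f (Xs K \<omega>)" by (rule cInf_lower[OF _ f_bdd]) simp
  ultimately have "(1 - \<zeta>)\<^sup>2 / 2 * (\<Sum>k<K. progress k \<omega>) \<le> initial_gap"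
    unfolding initial_gap_def by linarith
  then show ?case using zeta by (simp add: field_simps)
qed

lemma sum_expected_progress_le:
  "(\<Sum>k<K. \<integral>\<^sup>+ \<omega>. ennreal (progress k \<omega>) \<partial>M) \<le> ennreal (2 * initial_gap / (1 - \<zeta>)\<^sup>2)"
proof -
  have "(\<Sum>k<K. \<integral>\<^sup>+ \<omega>. ennreal (progress k \<omega>) \<partial>M) = (\<integral>\<^sup>+ \<omega>. ennreal (\<Sum>k<K. progress k \<omega>) \<partial>M)"
    using borel_measurable_progress progress_nonneg by (simp add: nn_integral_sum[symmetric])
  also have "\<dots> \<le> (\<integral>\<^sup>+ \<omega>. ennreal (2 * initial_gap / (1 - \<zeta>)\<^sup>2) \<partial>M)"
    by (rule nn_integral_mono_AE, rule eventually_mono[OF AE_sum_progress_le]) (rule ennreal_leI)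
  also have "\<dots> = ennreal (2 * initial_gap / (1 - \<zeta>)\<^sup>2)" by (simp add: M.emeasure_space_1)
  finally show ?thesis .
qed

lemma expected_block_bound:
  assumes i: "i < p"
  shows "ennreal (2 * l - l\<^sup>2 * ((1 + \<zeta>) * L1 i)) * (\<integral>\<^sup>+ \<omega>. ennreal (grad_norm i k \<omega>) \<partial>M)
    \<le> (\<integral>\<^sup>+ \<omega>. ennreal (block_progress i k \<omega>) \<partial>M) + ennreal (l\<^sup>2 * L0 i)"
proof -
  define c where "c = 2 * l - l\<^sup>2 * ((1 + \<zeta>) * L1 i)"
  have "ennreal c * (\<integral>\<^sup>+ \<omega>. ennreal (grad_norm i k \<omega>) \<partial>M)
      \<le> ennreal c * (\<integral>\<^sup>+ \<omega>. ennreal (sgrad_norm i k \<omega>) \<partial>M)"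
    by (rule mult_left_mono[OF expected_grad_norm_le[OF i]]) simp
  also have "\<dots> = (\<integral>\<^sup>+ \<omega>. ennreal (c * sgrad_norm i k \<omega>) \<partial>M)"
    using borel_measurable_sgrad_norm[OF i] sgrad_norm_nonneg[OF i]
    by (simp add: nn_integral_cmult ennreal_mult'')
  also have "\<dots> \<le> (\<integral>\<^sup>+ \<omega>. ennreal (block_progress i k \<omega>) + ennreal (l\<^sup>2 * L0 i) \<partial>M)"
  proof (rule nn_integral_mono)
    fix \<omega> assume "\<omega> \<in> space M"
    then have "sgrad_norm i k \<omega> \<noteq> 0 \<longrightarrow> L0 i + (1 + \<zeta>) * L1 i * sgrad_norm i k \<omega> \<noteq> 0"
      using well_def i unfolding sgrad_norm_def by blast
    moreover have "0 \<le> L0 i" "0 \<le> (1 + \<zeta>) * L1 i" using L_nonneg i zeta by simp_all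
    ultimately have "c * sgrad_norm i k \<omega> \<le> block_progress i k \<omega> + l\<^sup>2 * L0 i"
      using sq_div_affine_ge_tangent[of "L0 i" "(1 + \<zeta>) * L1 i" "sgrad_norm i k \<omega>" l]
        sgrad_norm_nonneg[OF i]
      unfolding c_def block_progress_def by simp
    then have "ennreal (c * sgrad_norm i k \<omega>) \<le> ennreal (block_progress i k \<omega> + l\<^sup>2 * L0 i)"
      by (rule ennreal_leI)
    also have "\<dots> = ennreal (block_progress i k \<omega>) + ennreal (l\<^sup>2 * L0 i)"
      using block_progress_nonneg[OF i] L_nonneg i by (intro ennreal_plus) auto
    finally show "ennreal (c * sgrad_norm i k \<omega>) \<le> ennreal (block_progress i k \<omega>) + ennreal (l\<^sup>2 * L0 i)" .
  qed
  also have "\<dots> = (\<integral>\<^sup>+ \<omega>. ennreal (block_progress i k \<omega>) \<partial>M) + ennreal (l\<^sup>2 * L0 i)"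
    using borel_measurable_block_progress[OF i] by (simp add: nn_integral_add M.emeasure_space_1)
  finally show ?thesis unfolding c_def .
qed

lemma weighted_grad_norm_le:
  "(\<Sum>i<p. ennreal (2 * l i - (l i)\<^sup>2 * ((1 + \<zeta>) * L1 i)) * (\<integral>\<^sup>+ \<omega>. ennreal (grad_norm i k \<omega>) \<partial>M))
    \<le> (\<integral>\<^sup>+ \<omega>. ennreal (progress k \<omega>) \<partial>M) + ennreal (\<Sum>i<p. (l i)\<^sup>2 * L0 i)"
proof -
  have "(\<Sum>i<p. ennreal (2 * l i - (l i)\<^sup>2 * ((1 + \<zeta>) * L1 i)) * (\<integral>\<^sup>+ \<omega>. ennreal (grad_norm i k \<omega>) \<partial>M))
      \<le> (\<Sum>i<p. (\<integral>\<^sup>+ \<omega>. ennreal (block_progress i k \<omega>) \<partial>M) + ennreal ((l i)\<^sup>2 * L0 i))"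
    by (intro sum_mono expected_block_bound) simp
  also have "\<dots> = (\<Sum>i<p. \<integral>\<^sup>+ \<omega>. ennreal (block_progress i k \<omega>) \<partial>M)
      + (\<Sum>i<p. ennreal ((l i)\<^sup>2 * L0 i))"
    by (rule sum.distrib)
  also have "(\<Sum>i<p. \<integral>\<^sup>+ \<omega>. ennreal (block_progress i k \<omega>) \<partial>M)
      = (\<integral>\<^sup>+ \<omega>. (\<Sum>i<p. ennreal (block_progress i k \<omega>)) \<partial>M)"
    by (rule nn_integral_sum[symmetric])
      (auto intro: measurable_compose[OF borel_measurable_block_progress measurable_ennreal])
  also have "\<dots> = (\<integral>\<^sup>+ \<omega>. ennreal (progress k \<omega>) \<partial>M)"
    unfolding progress_def by (intro nn_integral_cong sum_ennreal) (simp add: block_progress_nonneg)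
  also have "(\<Sum>i<p. ennreal ((l i)\<^sup>2 * L0 i)) = ennreal (\<Sum>i<p. (l i)\<^sup>2 * L0 i)"
    using L_nonneg by (intro sum_ennreal) simp
  finally show ?thesis .
qed

lemma scaled_weighted_grad_norm_le:
  fixes a :: "nat \<Rightarrow> real" and \<beta> s \<mu> :: real
  assumes a: "\<forall>i<p. 0 \<le> a i \<and> (1 + \<zeta>) * L1 i * a i \<le> \<beta>"
    and s: "0 < s" and \<mu>: "0 \<le> 2 * \<mu> - \<mu>\<^sup>2 * \<beta>"
  shows "ennreal ((2 * \<mu> - \<mu>\<^sup>2 * \<beta>) * s)
      * (\<Sum>i<p. ennreal (a i / s) * \<integral>\<^sup>+ \<omega>. ennreal (grad_norm i k \<omega>) \<partial>M)
    \<le> (\<integral>\<^sup>+ \<omega>. ennreal (progress k \<omega>) \<partial>M) + ennreal (\<mu>\<^sup>2 * (\<Sum>i<p. (a i)\<^sup>2 * L0 i))"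
proof -
  have "ennreal ((2 * \<mu> - \<mu>\<^sup>2 * \<beta>) * s) * ennreal (a i / s) = ennreal ((2 * \<mu> - \<mu>\<^sup>2 * \<beta>) * a i)"
    if "i < p" for i
    using \<mu> s a that by (simp add: ennreal_mult[symmetric])
  then have "ennreal ((2 * \<mu> - \<mu>\<^sup>2 * \<beta>) * s)
      * (\<Sum>i<p. ennreal (a i / s) * \<integral>\<^sup>+ \<omega>. ennreal (grad_norm i k \<omega>) \<partial>M)
    = (\<Sum>i<p. ennreal ((2 * \<mu> - \<mu>\<^sup>2 * \<beta>) * a i) * \<integral>\<^sup>+ \<omega>. ennreal (grad_norm i k \<omega>) \<partial>M)"
    by (simp add: sum_distrib_left mult.assoc[symmetric])
  also have "\<dots> \<le> (\<Sum>i<p. ennreal (2 * (\<mu> * a i) - (\<mu> * a i)\<^sup>2 * ((1 + \<zeta>) * L1 i))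
      * \<integral>\<^sup>+ \<omega>. ennreal (grad_norm i k \<omega>) \<partial>M)"
  proof (intro sum_mono mult_right_mono ennreal_leI)
    fix i assume "i \<in> {..<p}"
    then have "\<mu>\<^sup>2 * (a i * ((1 + \<zeta>) * L1 i * a i)) \<le> \<mu>\<^sup>2 * (a i * \<beta>)"
      using a by (intro mult_left_mono) auto
    then show "(2 * \<mu> - \<mu>\<^sup>2 * \<beta>) * a i \<le> 2 * (\<mu> * a i) - (\<mu> * a i)\<^sup>2 * ((1 + \<zeta>) * L1 i)"
      by (simp add: power2_eq_square algebra_simps)
  qed simp
  also have "\<dots> \<le> (\<integral>\<^sup>+ \<omega>. ennreal (progress k \<omega>) \<partial>M) + ennreal (\<Sum>i<p. (\<mu> * a i)\<^sup>2 * L0 i)"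
    by (rule weighted_grad_norm_le)
  also have "(\<Sum>i<p. (\<mu> * a i)\<^sup>2 * L0 i) = \<mu>\<^sup>2 * (\<Sum>i<p. (a i)\<^sup>2 * L0 i)"
    by (simp add: sum_distrib_left power_mult_distrib mult.assoc)
  finally show ?thesis .
qed

text \<open>Averaging the previous bound over the first \<open>K\<close> iterations; the weight \<open>\<mu>\<close> balances
  the telescoped progress against the \<open>L0\<close> terms.\<close>

lemma min_weighted_grad_norm_le:
  fixes a :: "nat \<Rightarrow> real" and \<beta> s \<epsilon> :: real and K :: nat
  assumes a: "\<forall>i<p. 0 \<le> a i \<and> (1 + \<zeta>) * L1 i * a i \<le> \<beta>"
    and \<beta>: "0 \<le> \<beta>" and s: "0 < s" and \<epsilon>: "0 < \<epsilon>"
    and K: "K = nat \<lceil>2 * initial_gap / (1 - \<zeta>)\<^sup>2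
                  * ((\<Sum>i<p. (a i)\<^sup>2 * L0 i) / (\<epsilon> * s)\<^sup>2 + \<beta> / (\<epsilon> * s))\<rceil>" "1 \<le> K"
  shows "Min ((\<lambda>k. \<Sum>i<p. ennreal (a i / s) * \<integral>\<^sup>+ \<omega>. ennreal (grad_norm i k \<omega>) \<partial>M) ` {..<K})
    \<le> ennreal \<epsilon>"
proof -
  define Q where "Q = 2 * initial_gap / (1 - \<zeta>)\<^sup>2"
  define A where "A = (\<Sum>i<p. (a i)\<^sup>2 * L0 i)"
  have A: "0 \<le> A" unfolding A_def using L_nonneg by (intro sum_nonneg) simp
  have "0 < \<epsilon> * s" using \<epsilon> s by simp
  then obtain \<mu> where \<mu>: "0 < 2 * \<mu> - \<mu>\<^sup>2 * \<beta>"
    and budget: "Q + real K * (\<mu>\<^sup>2 * A) \<le> real K * ((2 * \<mu> - \<mu>\<^sup>2 * \<beta>) * (\<epsilon> * s))"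
    by (rule exists_balancing_weight[OF _ A \<beta> K(1)[folded Q_def A_def] K(2)])
  show ?thesis
  proof (rule Min_le_of_sum_bound[where c = "(2 * \<mu> - \<mu>\<^sup>2 * \<beta>) * s" and r = "\<mu>\<^sup>2 * A" and Q = Q
        and E = "\<lambda>k. \<integral>\<^sup>+ \<omega>. ennreal (progress k \<omega>) \<partial>M"])
    show "ennreal ((2 * \<mu> - \<mu>\<^sup>2 * \<beta>) * s)
        * (\<Sum>i<p. ennreal (a i / s) * \<integral>\<^sup>+ \<omega>. ennreal (grad_norm i k \<omega>) \<partial>M)
      \<le> (\<integral>\<^sup>+ \<omega>. ennreal (progress k \<omega>) \<partial>M) + ennreal (\<mu>\<^sup>2 * A)" for k
      unfolding A_def using a s \<mu> by (intro scaled_weighted_grad_norm_le) auto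
    show "Q + real K * (\<mu>\<^sup>2 * A) \<le> real K * ((2 * \<mu> - \<mu>\<^sup>2 * \<beta>) * s) * \<epsilon>"
      using budget by (simp only: mult_ac)
    show "(\<Sum>k<K. \<integral>\<^sup>+ \<omega>. ennreal (progress k \<omega>) \<partial>M) \<le> ennreal Q"
      unfolding Q_def by (rule sum_expected_progress_le)
    show "0 \<le> Q" unfolding Q_def using initial_gap_nonneg by simp
    show "0 < (2 * \<mu> - \<mu>\<^sup>2 * \<beta>) * s" using \<mu> s by simp
  qed (use K(2) \<epsilon> A in simp_all)
qed

lemma min_grad_norm_le:
  assumes p: "1 \<le> p" and \<epsilon>: "0 < \<epsilon>"
    and K: "K = nat \<lceil>2 * initial_gap * (\<Sum>i<p. L0 i) / ((1 - \<zeta>)\<^sup>2 * \<epsilon>\<^sup>2)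
               + 2 * (1 + \<zeta>) * Max (L1 ` {..<p}) * initial_gap / ((1 - \<zeta>)\<^sup>2 * \<epsilon>)\<rceil>" "1 \<le> K"
  shows "Min ((\<lambda>k. \<Sum>i<p. \<integral>\<^sup>+ \<omega>. ennreal (grad_norm i k \<omega>) \<partial>M) ` {..<K}) \<le> ennreal \<epsilon>"
proof -
  let ?\<beta> = "(1 + \<zeta>) * Max (L1 ` {..<p})"
  have "0 \<le> L1 0" using L_nonneg p by simp
  also have "L1 0 \<le> Max (L1 ` {..<p})" using p by (intro Max_ge) auto
  finally have \<beta>: "0 \<le> ?\<beta>" using zeta by simp
  have a: "\<forall>i<p. 0 \<le> (1::real) \<and> (1 + \<zeta>) * L1 i * 1 \<le> ?\<beta>"
    using zeta by (auto intro!: mult_left_mono Max_ge)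
  have "2 * initial_gap * (\<Sum>i<p. L0 i) / ((1 - \<zeta>)\<^sup>2 * \<epsilon>\<^sup>2)
      + 2 * (1 + \<zeta>) * Max (L1 ` {..<p}) * initial_gap / ((1 - \<zeta>)\<^sup>2 * \<epsilon>)
    = 2 * initial_gap / (1 - \<zeta>)\<^sup>2 * ((\<Sum>i<p. 1\<^sup>2 * L0 i) / (\<epsilon> * 1)\<^sup>2 + ?\<beta> / (\<epsilon> * 1))"
    using \<epsilon> zeta by (simp add: field_simps)
  then show ?thesis
    using min_weighted_grad_norm_le[of "\<lambda>_. 1" ?\<beta> 1 \<epsilon> K] a \<beta> \<epsilon> K by simp
qed

lemma min_harmonic_weighted_grad_norm_le:
  assumes p: "1 \<le> p" and \<epsilon>: "0 < \<epsilon>" and L1: "\<forall>i<p. 0 < L1 i"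
    and H: "H = 1 / real p * (\<Sum>j<p. 1 / L1 j)"
    and K: "K = nat \<lceil>2 * initial_gap * (\<Sum>i<p. L0 i / (L1 i)\<^sup>2) / (\<epsilon>\<^sup>2 * (1 - \<zeta>)\<^sup>2 * H\<^sup>2)
               + 2 * initial_gap * (1 + \<zeta>) / (\<epsilon> * (1 - \<zeta>)\<^sup>2 * H)\<rceil>" "1 \<le> K"
  shows "Min ((\<lambda>k. \<Sum>i<p. ennreal ((1 / L1 i) / H) * \<integral>\<^sup>+ \<omega>. ennreal (grad_norm i k \<omega>) \<partial>M)
      ` {..<K}) \<le> ennreal \<epsilon>"
proof -
  have "0 < (\<Sum>j<p. 1 / L1 j)" using L1 p by (intro sum_pos) (auto simp: lessThan_empty_iff)
  then have H0: "0 < H" using H p by simp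
  have a: "\<forall>i<p. 0 \<le> 1 / L1 i \<and> (1 + \<zeta>) * L1 i * (1 / L1 i) \<le> 1 + \<zeta>"
    using L1 zeta by (simp add: less_imp_le)
  have "(\<Sum>i<p. L0 i / (L1 i)\<^sup>2) = (\<Sum>i<p. (1 / L1 i)\<^sup>2 * L0 i)"
    by (simp add: power_divide)
  then have "2 * initial_gap * (\<Sum>i<p. L0 i / (L1 i)\<^sup>2) / (\<epsilon>\<^sup>2 * (1 - \<zeta>)\<^sup>2 * H\<^sup>2)
      + 2 * initial_gap * (1 + \<zeta>) / (\<epsilon> * (1 - \<zeta>)\<^sup>2 * H)
    = 2 * initial_gap / (1 - \<zeta>)\<^sup>2
      * ((\<Sum>i<p. (1 / L1 i)\<^sup>2 * L0 i) / (\<epsilon> * H)\<^sup>2 + (1 + \<zeta>) / (\<epsilon> * H))"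
    using \<epsilon> zeta H0 by (simp add: field_simps)
  then show ?thesis
    using min_weighted_grad_norm_le[of "\<lambda>i. 1 / L1 i" "1 + \<zeta>" H \<epsilon> K] a zeta H0 \<epsilon> K by simp
qed

end

theorem theorem5:
  fixes lay :: "'n::finite \<Rightarrow> nat" and p :: nat
    and N :: "nat \<Rightarrow> real^'n \<Rightarrow> real"
    and D :: "'a measure"
    and fs :: "'a \<Rightarrow> real^'n \<Rightarrow> real" and gs :: "'a \<Rightarrow> real^'n \<Rightarrow> real^'n"
    and f :: "real^'n \<Rightarrow> real" and gF :: "real^'n \<Rightarrow> real^'n"
    and L0 L1 :: "nat \<Rightarrow> real" and \<zeta> \<epsilon> :: real
    and M :: "'w measure" and \<xi> :: "nat \<Rightarrow> 'w \<Rightarrow> 'a" and Xs :: "nat \<Rightarrow> 'w \<Rightarrow> real^'n"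
    and X0 :: "real^'n"
  assumes p_pos: "p \<ge> 1"
    and lay_range: "\<forall>k. lay k < p"
    and norms: "\<forall>i<p. norm_on (layer_space lay i) (N i)"
    and D_prob: "prob_space D"
    and fs_C1: "\<forall>\<xi>\<in>space D. (\<forall>X. (fs \<xi> has_derivative (\<lambda>h. gs \<xi> X \<bullet> h)) (at X))
                                 \<and> continuous_on UNIV (gs \<xi>)"
    and f_expect: "\<forall>X. integrable D (\<lambda>\<xi>. fs \<xi> X) \<and> f X = (\<integral>\<xi>. fs \<xi> X \<partial>D)"
    and f_grad: "\<forall>X. (f has_derivative (\<lambda>h. gF X \<bullet> h)) (at X)"
    and f_bdd: "bdd_below (range f)"
    and L_nonneg: "\<forall>i<p. 0 \<le> L0 i \<and> 0 \<le> L1 i"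
    and smooth: "layerwise_L0L1_smooth lay p N L0 L1 gF"
    and unbiased: "\<forall>X. integrable D (\<lambda>\<xi>. gs \<xi> X) \<and> (\<integral>\<xi>. gs \<xi> X \<partial>D) = gF X"
    and zeta: "0 \<le> \<zeta>" "\<zeta> < 1"
    and rel_var: "AE \<xi>' in D. \<forall>X. \<forall>i<p.
         dual_norm lay (N i) i (gs \<xi>' X - gF X) \<le> \<zeta> * dual_norm lay (N i) i (gs \<xi>' X)"
    and eps: "\<epsilon> > 0"
    and M_prob: "prob_space M"
    and xi_rv: "\<forall>k. \<xi> k \<in> measurable M D \<and> distr M D (\<xi> k) = D"
    and Xs_rv: "\<forall>k. Xs k \<in> borel_measurable M"
    and xi_indep: "\<forall>k. prob_space.indep_set M
         {\<xi> k -` A \<inter> space M | A. A \<in> sets D}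
         {(\<lambda>\<omega>. (restrict (\<lambda>j. Xs j \<omega>) {..k}, restrict (\<lambda>j. \<xi> j \<omega>) {..<k})) -` B \<inter> space M
           | B. B \<in> sets (PiM {..k} (\<lambda>_. borel) \<Otimes>\<^sub>M PiM {..<k} (\<lambda>_. D))}"
    and X_init: "\<forall>\<omega>\<in>space M. Xs 0 \<omega> = X0"
    and well_def: "\<forall>k. \<forall>\<omega>\<in>space M. \<forall>i<p.
         dual_norm lay (N i) i (gs (\<xi> k \<omega>) (Xs k \<omega>)) \<noteq> 0 \<longrightarrow>
         L0 i + (1 + \<zeta>) * L1 i * dual_norm lay (N i) i (gs (\<xi> k \<omega>) (Xs k \<omega>)) \<noteq> 0"
    and gluon: "\<forall>k. \<forall>\<omega>\<in>space M. \<forall>i<p.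
         lmo_step lay (N i) i (gs (\<xi> k \<omega>) (Xs k \<omega>)) (Xs k \<omega>)
           ((1 - \<zeta>) * dual_norm lay (N i) i (gs (\<xi> k \<omega>) (Xs k \<omega>))
             / (L0 i + (1 + \<zeta>) * L1 i * dual_norm lay (N i) i (gs (\<xi> k \<omega>) (Xs k \<omega>))))
           (Xs (Suc k) \<omega>)"
  shows
    "(let \<Delta>0 = f X0 - Inf (range f);
          L1max = Max (L1 ` {..<p});
          K = nat \<lceil>2 * \<Delta>0 * (\<Sum>i<p. L0 i) / ((1 - \<zeta>)\<^sup>2 * \<epsilon>\<^sup>2)
                   + 2 * (1 + \<zeta>) * L1max * \<Delta>0 / ((1 - \<zeta>)\<^sup>2 * \<epsilon>)\<rceil>
      in K \<ge> 1 \<longrightarrow>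
         Min ((\<lambda>k. \<Sum>i<p. \<integral>\<^sup>+ \<omega>. ennreal (dual_norm lay (N i) i (gF (Xs k \<omega>))) \<partial>M) ` {..<K})
           \<le> ennreal \<epsilon>)
   \<and> ((\<forall>i<p. L1 i > 0) \<longrightarrow>
      (let \<Delta>0 = f X0 - Inf (range f);
           H = (1 / real p) * (\<Sum>j<p. 1 / L1 j);
           K = nat \<lceil>2 * \<Delta>0 * (\<Sum>i<p. L0 i / (L1 i)\<^sup>2) / (\<epsilon>\<^sup>2 * (1 - \<zeta>)\<^sup>2 * H\<^sup>2)
                    + 2 * \<Delta>0 * (1 + \<zeta>) / (\<epsilon> * (1 - \<zeta>)\<^sup>2 * H)\<rceil>
       in K \<ge> 1 \<longrightarrow>
          Min ((\<lambda>k. \<Sum>i<p. ennreal ((1 / L1 i) / H) *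
                  \<integral>\<^sup>+ \<omega>. ennreal (dual_norm lay (N i) i (gF (Xs k \<omega>))) \<partial>M) ` {..<K})
            \<le> ennreal \<epsilon>))"
proof -
  have gs_continuous: "\<forall>\<xi>\<in>space D. continuous_on UNIV (gs \<xi>)" using fs_C1 by blast
  interpret stochastic_gluon M D lay p N gs f gF L0 L1 \<zeta> \<xi> Xs X0
    by (rule stochastic_gluon.intro[OF M_prob D_prob stochastic_gluon_axioms.intro[OF lay_range norms
          gs_continuous f_grad f_bdd L_nonneg smooth unbiased zeta rel_var xi_rv Xs_rv xi_indep
          X_init well_def gluon]])
  show ?thesis
    unfolding Let_def initial_gap_def[symmetric] grad_norm_def[symmetric]
    using min_grad_norm_le[OF p_pos eps refl] min_harmonic_weighted_grad_norm_le[OF p_pos eps _ refl refl]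
    by blast
qed

end
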